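(* For every $n\ge 1$, the burning number of the directed cycle $C_n$ on $n$ nodes is $\left\lceil \sqrt{2n+\tfrac14}-\tfrac12\right\rceil$.
   Context: Burning process on a digraph $D$: a sequence $(x_1,\ldots,x_b)$ of nodes is a burning sequence for $D$ if after $b$ steps of the following process every node of $D$ is burned; the $i$-th step consists of first burning all out-neighbours of all currently burned nodes, and then burning the node $x_i$. The burning number of $D$ is the length of a shortest burning sequence. Equivalently, with $N^+_k(v)$ the set of nodes reachable from $v$ by a directed path with at most $k$ arcs, the burning number is the least $b$ such that there are nodes $v_1,\ldots,v_b$ with $V(D)=\bigcup_{i=1}^b N^+_{i-1}(v_i)$. *)

theory Defs
  imports Complex_Main
begin

definition out_ball :: "'a rel \<Rightarrow> nat \<Rightarrow> 'a \<Rightarrow> 'a set" where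
  "out_ball A k v = {w. \<exists>j\<le>k. (v, w) \<in> A ^^ j}"

text \<open>Burning number: least b such that there are nodes v_1..v_b (here xs!0..xs!(b-1))
  with V the union of N^+_{i-1}(v_i).\<close>
definition burning_number :: "'a set \<Rightarrow> 'a rel \<Rightarrow> nat" where
  "burning_number V A =
     (LEAST b. \<exists>xs. length xs = b \<and> set xs \<subseteq> V \<and> V = (\<Union>i<b. out_ball A i (xs ! i)))"

definition dcycle_arcs :: "nat \<Rightarrow> nat rel" where
  "dcycle_arcs n = {(i, Suc i mod n) | i. i < n}"

end

theory Submission
  imports Defs
begin

text \<open>On the directed cycle every node has out-degree one, so N^+_k(v) is the arc of
  at most k + 1 consecutive nodes starting at v. Hence b fires burn at most
  1 + 2 + \<dots> + b = b(b+1)/2 nodes; conversely, placing the i-th fire at the end of the arcs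
  already burned by the earlier fires tiles the cycle as soon as n \<le> b(b+1)/2. The burning
  number is therefore the least b with 2n \<le> b(b+1), i.e. with (2n + 1/4) \<le> (b + 1/2)^2.\<close>

definition triangular :: "nat \<Rightarrow> nat" where
  "triangular b = (\<Sum>k<b. Suc k)"

lemma triangular_0 [simp]: "triangular 0 = 0"
  by (simp add: triangular_def)

lemma triangular_Suc [simp]: "triangular (Suc b) = triangular b + Suc b"
  by (simp add: triangular_def)

lemma two_triangular: "2 * triangular b = b * (b + 1)"
  by (induction b) auto

lemma less_triangular_decomp:
  assumes "m < triangular b"
  obtains i j where "i < b" "j \<le> i" "m = triangular i + j"
  using assms
proof (induction b)
  case (Suc b)
  show ?case
  proof (cases "m < triangular b")
    case True
    then show ?thesis using Suc.IH Suc.prems(1) less_SucI by blast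
  next
    case False
    then show ?thesis using Suc.prems by (intro Suc.prems(1)[of b "m - triangular b"]) auto
  qed
qed simp

lemma triangular_ge_iff_sqrt:
  "n \<le> triangular b \<longleftrightarrow> sqrt (2 * real n + 1/4) - 1/2 \<le> real b"
proof -
  have "n \<le> triangular b \<longleftrightarrow> 2 * n \<le> b * (b + 1)"
    using two_triangular[of b] by linarith
  also have "\<dots> \<longleftrightarrow> real (2 * n) \<le> real (b * (b + 1))"
    by (simp only: of_nat_le_iff)
  also have "\<dots> \<longleftrightarrow> 2 * real n \<le> real b * (real b + 1)"
    by (simp add: algebra_simps)
  also have "\<dots> \<longleftrightarrow> 2 * real n + 1/4 \<le> (real b + 1/2)\<^sup>2"
    by (simp add: power2_eq_square algebra_simps)
  also have "\<dots> \<longleftrightarrow> sqrt (2 * real n + 1/4) \<le> sqrt ((real b + 1/2)\<^sup>2)"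
    by (rule real_sqrt_le_iff[symmetric])
  also have "sqrt ((real b + 1/2)\<^sup>2) = real b + 1/2"
    by simp
  finally show ?thesis by linarith
qed

lemma Least_of_nat_ge_eq_nat_ceiling: "(LEAST b. x \<le> real b) = nat \<lceil>x\<rceil>"
proof (rule Least_equality)
  show "x \<le> real (nat \<lceil>x\<rceil>)"
    by (cases "x \<le> 0") auto
next
  fix b assume "x \<le> real b"
  then show "nat \<lceil>x\<rceil> \<le> b"
    by (simp add: ceiling_le_iff nat_le_iff)
qed

lemma card_le_triangular_if_burning:
  assumes small_balls: "\<And>v k. v \<in> V \<Longrightarrow> card (out_ball A k v) \<le> Suc k"
    and "set xs \<subseteq> V" "V = (\<Union>i<length xs. out_ball A i (xs ! i))"
  shows "card V \<le> triangular (length xs)"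
proof -
  have "card V \<le> (\<Sum>i<length xs. card (out_ball A i (xs ! i)))"
    by (subst assms(3)) (rule card_UN_le, simp)
  also have "\<dots> \<le> (\<Sum>i<length xs. Suc i)"
    using assms(2) by (intro sum_mono small_balls) auto
  finally show ?thesis
    by (simp add: triangular_def)
qed

lemma relpow_dcycle_arcs_iff:
  assumes "v < n"
  shows "(v, w) \<in> dcycle_arcs n ^^ j \<longleftrightarrow> w = (v + j) mod n"
proof (induction j arbitrary: w)
  case 0
  then show ?case using assms by auto
next
  case (Suc j)
  have "(v, w) \<in> dcycle_arcs n ^^ Suc j \<longleftrightarrow> ((v + j) mod n, w) \<in> dcycle_arcs n"
    using Suc.IH by auto
  also have "\<dots> \<longleftrightarrow> w = (v + Suc j) mod n"
    using assms by (auto simp: dcycle_arcs_def mod_Suc_eq)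
  finally show ?case .
qed

lemma out_ball_dcycle_arcs:
  assumes "v < n"
  shows "out_ball (dcycle_arcs n) k v = (\<lambda>j. (v + j) mod n) ` {..k}"
  using relpow_dcycle_arcs_iff[OF assms] by (auto simp: out_ball_def)

lemma card_out_ball_dcycle_arcs_le:
  assumes "v < n"
  shows "card (out_ball (dcycle_arcs n) k v) \<le> Suc k"
  unfolding out_ball_dcycle_arcs[OF assms]
  using card_image_le[OF finite_atMost, of _ k] by simp

lemma dcycle_burning_sequence:
  assumes "0 < n" "n \<le> triangular b"
  defines "xs \<equiv> map (\<lambda>i. triangular i mod n) [0..<b]"
  shows "set xs \<subseteq> {..<n}" "{..<n} = (\<Union>i<length xs. out_ball (dcycle_arcs n) i (xs ! i))"
proof -
  show "set xs \<subseteq> {..<n}"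
    using assms(1) by (auto simp: xs_def)
  have ball: "out_ball (dcycle_arcs n) i (xs ! i) = (\<lambda>j. (triangular i + j) mod n) ` {..i}"
    if "i < b" for i
    using that assms(1) by (simp add: xs_def out_ball_dcycle_arcs mod_add_left_eq)
  have "m \<in> (\<Union>i<b. out_ball (dcycle_arcs n) i (xs ! i))" if "m < n" for m
  proof -
    have "m < triangular b"
      using that assms(2) by linarith
    then obtain i j where "i < b" "j \<le> i" "m = triangular i + j"
      by (rule less_triangular_decomp)
    then have "m \<in> (\<lambda>j. (triangular i + j) mod n) ` {..i}"
      using that by (auto intro: rev_image_eqI[of j])
    with \<open>i < b\<close> show ?thesis
      using ball by blast
  qed
  moreover have "out_ball (dcycle_arcs n) i (xs ! i) \<subseteq> {..<n}" if "i < b" for i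
    using ball[OF that] assms(1) by auto
  moreover have "length xs = b"
    by (simp add: xs_def)
  ultimately show "{..<n} = (\<Union>i<length xs. out_ball (dcycle_arcs n) i (xs ! i))"
    by blast
qed

lemma burning_number_dcycle:
  assumes "0 < n"
  shows "burning_number {..<n} (dcycle_arcs n) = (LEAST b. n \<le> triangular b)"
proof -
  have "(\<exists>xs. length xs = b \<and> set xs \<subseteq> {..<n} \<and>
          {..<n} = (\<Union>i<b. out_ball (dcycle_arcs n) i (xs ! i))) \<longleftrightarrow> n \<le> triangular b" for b
  proof
    assume "\<exists>xs. length xs = b \<and> set xs \<subseteq> {..<n} \<and>
              {..<n} = (\<Union>i<b. out_ball (dcycle_arcs n) i (xs ! i))"
    then obtain xs where xs: "length xs = b" "set xs \<subseteq> {..<n}"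
      "{..<n} = (\<Union>i<length xs. out_ball (dcycle_arcs n) i (xs ! i))"
      by blast
    have "card {..<n} \<le> triangular (length xs)"
      by (rule card_le_triangular_if_burning[OF _ xs(2,3)]) (simp add: card_out_ball_dcycle_arcs_le)
    then show "n \<le> triangular b"
      using xs(1) by simp
  next
    assume "n \<le> triangular b"
    then show "\<exists>xs. length xs = b \<and> set xs \<subseteq> {..<n} \<and>
                 {..<n} = (\<Union>i<b. out_ball (dcycle_arcs n) i (xs ! i))"
      using dcycle_burning_sequence[OF assms]
      by (intro exI[of _ "map (\<lambda>i. triangular i mod n) [0..<b]"]) simp
  qed
  then show ?thesis
    by (simp add: burning_number_def)
qed

theorem mainTheorem6:
  fixes n :: nat
  assumes "n \<ge> 1"
  shows "int (burning_number {..<n} (dcycle_arcs n)) = \<lceil>sqrt (2 * real n + 1/4) - 1/2\<rceil>"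
proof -
  have "0 \<le> sqrt (2 * real n + 1/4) - 1/2"
    using real_sqrt_le_mono[of "1/4" "2 * real n + 1/4"] by (simp add: real_sqrt_divide)
  have "burning_number {..<n} (dcycle_arcs n) = (LEAST b. n \<le> triangular b)"
    using assms by (simp add: burning_number_dcycle)
  also have "\<dots> = nat \<lceil>sqrt (2 * real n + 1/4) - 1/2\<rceil>"
    by (simp only: triangular_ge_iff_sqrt Least_of_nat_ge_eq_nat_ceiling)
  finally show ?thesis
    using \<open>0 \<le> sqrt (2 * real n + 1/4) - 1/2\<close> by simp
qed

end
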